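(* Let $n\ge 2$, $c\ge 4$, $\Delta>0$, $d\le n$, and let $\hat V$ be a family of at most $n$ vectors in $\mathbb{R}^d$ such that every vertex has expected degree at most $c$ in $G\sim\mathcal{G}_{\hat V}$ and the expected number of triangles in $G\sim\mathcal{G}_{\hat V}$ is at least $\Delta n$. Assume moreover that $10c^3d\le \Delta n/\lg^2 n$ and $\Delta n/\lg^2 n+4\le \Delta n/2$. Let $V'\subseteq \hat V$ be the subfamily of vectors whose Euclidean length lies in $[n^{-2},2\sqrt n]$. Then every vertex has expected degree at most $c$ in $G\sim\mathcal{G}_{V'}$, and the expected number of triangles in $G\sim\mathcal{G}_{V'}$ is at least $\Delta n/2$.
   Context: For a finite family of vectors $W=(\vec w_i)_{i\in I}$ in $\mathbb{R}^d$, $\mathcal{G}_W$ is the distribution on simple undirected graphs with vertex set $I$ in which, independently for each unordered pair $\{i,j\}$ with $i\neq j$, the edge $(i,j)$ is present with probability $\max(0,\min(\vec w_i\cdot\vec w_j,1))$. The expected degree of $i$ is $\sum_{j\ne i}\max(0,\min(\vec w_i\cdot\vec w_j,1))$. A triangle is a set of three distinct pairwise adjacent vertices. $\lg$ is the base-2 logarithm. *)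

theory Defs
  imports "HOL-Analysis.Analysis" "HOL-Probability.Probability"
begin

definition edge_prob :: "('i \<Rightarrow> real ^ 'd) \<Rightarrow> 'i \<Rightarrow> 'i \<Rightarrow> real" where
  "edge_prob W i j = max 0 (min (inner (W i) (W j)) 1)"

definition upairs :: "'i set \<Rightarrow> 'i set set" where
  "upairs I = {{i, j} | i j. i \<in> I \<and> j \<in> I \<and> i \<noteq> j}"

text \<open>The random graph G_W on vertex set I: an edge indicator function on unordered pairs,
  each pair {i,j} present independently with probability edge_prob W i j.\<close>
definition rand_graph :: "'i set \<Rightarrow> ('i \<Rightarrow> real ^ 'd) \<Rightarrow> ('i set \<Rightarrow> bool) pmf" where
  "rand_graph I W = Pi_pmf (upairs I) False
     (\<lambda>e. bernoulli_pmf (edge_prob W (SOME i. i \<in> e) (SOME j. j \<in> e \<and> j \<noteq> (SOME i. i \<in> e))))"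

definition degree :: "'i set \<Rightarrow> ('i set \<Rightarrow> bool) \<Rightarrow> 'i \<Rightarrow> nat" where
  "degree I E i = card {j \<in> I. j \<noteq> i \<and> E {i, j}}"

definition triangles :: "'i set \<Rightarrow> ('i set \<Rightarrow> bool) \<Rightarrow> 'i set set" where
  "triangles I E = {T. T \<subseteq> I \<and> card T = 3 \<and> (\<forall>x\<in>T. \<forall>y\<in>T. x \<noteq> y \<longrightarrow> E {x, y})}"

definition expected_degree :: "'i set \<Rightarrow> ('i \<Rightarrow> real ^ 'd) \<Rightarrow> 'i \<Rightarrow> real" where
  "expected_degree I W i = measure_pmf.expectation (rand_graph I W) (\<lambda>E. real (degree I E i))"

definition expected_triangles :: "'i set \<Rightarrow> ('i \<Rightarrow> real ^ 'd) \<Rightarrow> real" where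
  "expected_triangles I W = measure_pmf.expectation (rand_graph I W) (\<lambda>E. real (card (triangles I E)))"

end

(*
  Removing vertices only removes edges, so expected degrees cannot grow; the work is to show that
  few expected triangles are lost.  A lost triangle contains either a long vector (norm > 2 sqrt n)
  or a short one (norm < n^-2) and no long one.  There are at most n^3 triangles of the second
  kind, each of probability at most (n^-2 * 2 sqrt n)^2 = 4/n^3.  Through any vertex pass at most
  c^2 expected triangles, and there are at most d (5/2 + 2c) long vectors: their unit vectors have
  a Gram matrix G with G_ii = 1 and positive off-diagonal entries at most the edge probability
  plus 1/(4n), so every row of max(0, G) sums to at most c + 5/4; then
  m^2 = (tr G)^2 <= d |G|_F^2 <= d sum |G_ij| <= 2 d m (c + 5/4), using sum G_ij = |sum x_i|^2 >= 0.
  Altogether at most 10 c^3 d + 4 expected triangles are lost.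
*)
theory Submission
  imports Defs
begin

lemma prod_of_bool:
  "finite A \<Longrightarrow> (\<Prod>e\<in>A. of_bool (P e)) = (of_bool (\<forall>e\<in>A. P e) :: 'a::comm_semiring_1)"
  by (induction A rule: finite_induct) auto

lemma sum_swap_double:
  "(\<Sum>i\<in>A. \<Sum>j\<in>B. \<Sum>k\<in>C. \<Sum>l\<in>D. f i j k l) = (\<Sum>k\<in>C. \<Sum>l\<in>D. \<Sum>i\<in>A. \<Sum>j\<in>B. f i j k l)"
proof -
  have "(\<Sum>i\<in>A. \<Sum>j\<in>B. \<Sum>k\<in>C. \<Sum>l\<in>D. f i j k l) = (\<Sum>i\<in>A. \<Sum>k\<in>C. \<Sum>j\<in>B. \<Sum>l\<in>D. f i j k l)"
    by (rule sum.cong[OF refl], rule sum.swap)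
  also have "\<dots> = (\<Sum>i\<in>A. \<Sum>k\<in>C. \<Sum>l\<in>D. \<Sum>j\<in>B. f i j k l)"
    by (rule sum.cong[OF refl], rule sum.cong[OF refl], rule sum.swap)
  also have "\<dots> = (\<Sum>k\<in>C. \<Sum>i\<in>A. \<Sum>l\<in>D. \<Sum>j\<in>B. f i j k l)"
    by (rule sum.swap)
  also have "\<dots> = (\<Sum>k\<in>C. \<Sum>l\<in>D. \<Sum>i\<in>A. \<Sum>j\<in>B. f i j k l)"
    by (rule sum.cong[OF refl], rule sum.swap)
  finally show ?thesis .
qed

lemma sum_le_sum_containing_plus_sum_disjoint:
  fixes f :: "'a set \<Rightarrow> real"
  assumes "finite A" "finite L" "\<forall>T\<in>A. 0 \<le> f T"
  shows "(\<Sum>T\<in>A. f T) \<le> (\<Sum>i\<in>L. \<Sum>T\<in>{T \<in> A. i \<in> T}. f T) + (\<Sum>T\<in>{T \<in> A. T \<inter> L = {}}. f T)"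
proof -
  have "(\<Sum>T\<in>A. f T) \<le> (\<Sum>T\<in>A. (\<Sum>i\<in>L. f T * of_bool (i \<in> T)) + f T * of_bool (T \<inter> L = {}))"
  proof (rule sum_mono)
    fix T assume "T \<in> A"
    show "f T \<le> (\<Sum>i\<in>L. f T * of_bool (i \<in> T)) + f T * of_bool (T \<inter> L = {})"
    proof (cases "T \<inter> L = {}")
      case True
      then show ?thesis
        using assms(3) \<open>T \<in> A\<close> by (simp add: sum_nonneg)
    next
      case False
      then obtain i where "i \<in> T" "i \<in> L" by blast
      then show ?thesis
        using False assms \<open>T \<in> A\<close> member_le_sum[of i L "\<lambda>i. f T * of_bool (i \<in> T)"] by auto
    qed
  qed
  also have "\<dots> = (\<Sum>i\<in>L. \<Sum>T\<in>{T \<in> A. i \<in> T}. f T) + (\<Sum>T\<in>{T \<in> A. T \<inter> L = {}}. f T)"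
    using assms(1) by (simp only: sum.distrib sum.swap[of _ L A]) (simp add: Int_def)
  finally show ?thesis .
qed

lemma gram_trace_squared_le:
  fixes x :: "'i \<Rightarrow> 'a::euclidean_space"
  shows "(\<Sum>i\<in>L. inner (x i) (x i))\<^sup>2 \<le> DIM('a) * (\<Sum>i\<in>L. \<Sum>j\<in>L. (inner (x i) (x j))\<^sup>2)"
proof -
  define S where "S b b' = (\<Sum>i\<in>L. inner (x i) b * inner (x i) b')" for b b'
  have inner_eq: "inner (x i) (x j) = (\<Sum>b\<in>Basis. inner (x i) b * inner (x j) b)" for i j
    by (rule euclidean_inner)
  have trace: "(\<Sum>i\<in>L. inner (x i) (x i)) = (\<Sum>b\<in>Basis. S b b)"
    unfolding inner_eq S_def by (rule sum.swap)
  define g where "g i j b b' = (inner (x i) b * inner (x i) b') * (inner (x j) b * inner (x j) b')"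
    for i j b b'
  have "(inner (x i) (x j))\<^sup>2 = (\<Sum>b\<in>Basis. \<Sum>b'\<in>Basis. g i j b b')" for i j
    unfolding power2_eq_square inner_eq[of i j] sum_product g_def
    by (intro sum.cong refl) (simp only: ac_simps)
  then have "(\<Sum>i\<in>L. \<Sum>j\<in>L. (inner (x i) (x j))\<^sup>2) = (\<Sum>i\<in>L. \<Sum>j\<in>L. \<Sum>b\<in>Basis. \<Sum>b'\<in>Basis. g i j b b')"
    by simp
  also have "\<dots> = (\<Sum>b\<in>Basis. \<Sum>b'\<in>Basis. \<Sum>i\<in>L. \<Sum>j\<in>L. g i j b b')"
    by (rule sum_swap_double)
  also have "\<dots> = (\<Sum>b\<in>Basis. \<Sum>b'\<in>Basis. (S b b')\<^sup>2)"
    unfolding power2_eq_square S_def sum_product g_def ..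
  finally have frobenius: "(\<Sum>i\<in>L. \<Sum>j\<in>L. (inner (x i) (x j))\<^sup>2) = (\<Sum>b\<in>Basis. \<Sum>b'\<in>Basis. (S b b')\<^sup>2)" .
  have "(\<Sum>i\<in>L. inner (x i) (x i))\<^sup>2 \<le> (\<Sum>b\<in>Basis. (S b b)\<^sup>2) * DIM('a)"
    unfolding trace by (rule sum_squared_le_sum_of_squares)
  also have "\<dots> \<le> (\<Sum>b\<in>Basis. \<Sum>b'\<in>Basis. (S b b')\<^sup>2) * DIM('a)"
    by (intro mult_right_mono sum_mono member_le_sum) auto
  also have "\<dots> = DIM('a) * (\<Sum>i\<in>L. \<Sum>j\<in>L. (inner (x i) (x j))\<^sup>2)"
    unfolding frobenius by (rule mult.commute)
  finally show ?thesis .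
qed

lemma card_le_of_positive_inner_row_sums:
  fixes x :: "'i \<Rightarrow> 'a::euclidean_space"
  assumes "finite L" "\<forall>i\<in>L. norm (x i) = 1" "0 \<le> r"
    and "\<forall>i\<in>L. (\<Sum>j\<in>L. max 0 (inner (x i) (x j))) \<le> r"
  shows "real (card L) \<le> 2 * r * DIM('a)"
proof -
  define m where "m = real (card L)"
  define G where "G i j = inner (x i) (x j)" for i j
  have G_abs_le_1: "\<bar>G i j\<bar> \<le> 1" if "i \<in> L" "j \<in> L" for i j
    using Cauchy_Schwarz_ineq2[of "x i" "x j"] assms(2) that by (simp add: G_def)
  have "(\<Sum>i\<in>L. \<Sum>j\<in>L. G i j) = inner (\<Sum>i\<in>L. x i) (\<Sum>j\<in>L. x j)"
    by (simp add: G_def inner_sum_left inner_sum_right) (rule sum.swap)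
  then have sum_G_nonneg: "0 \<le> (\<Sum>i\<in>L. \<Sum>j\<in>L. G i j)"
    by simp
  have "(\<Sum>i\<in>L. \<Sum>j\<in>L. (G i j)\<^sup>2) \<le> (\<Sum>i\<in>L. \<Sum>j\<in>L. \<bar>G i j\<bar>)"
  proof (intro sum_mono)
    fix i j assume "i \<in> L" "j \<in> L"
    then have "\<bar>G i j\<bar> \<le> 1" by (rule G_abs_le_1)
    then show "(G i j)\<^sup>2 \<le> \<bar>G i j\<bar>"
      by (metis abs_ge_zero abs_mult_self_eq mult_left_le power2_eq_square)
  qed
  also have "\<dots> = (\<Sum>i\<in>L. \<Sum>j\<in>L. 2 * max 0 (G i j) - G i j)"
    by (intro sum.cong refl) (auto simp: max_def)
  also have "\<dots> = 2 * (\<Sum>i\<in>L. \<Sum>j\<in>L. max 0 (G i j)) - (\<Sum>i\<in>L. \<Sum>j\<in>L. G i j)"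
    by (simp add: sum_subtractf sum_distrib_left)
  also have "\<dots> \<le> 2 * (m * r)"
    using sum_G_nonneg sum_mono[of L "\<lambda>i. \<Sum>j\<in>L. max 0 (G i j)" "\<lambda>_. r"] assms(4)
    by (simp add: G_def m_def)
  finally have frobenius_le: "(\<Sum>i\<in>L. \<Sum>j\<in>L. (G i j)\<^sup>2) \<le> 2 * (m * r)" .
  have "(\<Sum>i\<in>L. G i i) = m"
    using assms(2) by (simp add: G_def m_def flip: power2_norm_eq_inner)
  then have "m\<^sup>2 \<le> DIM('a) * (\<Sum>i\<in>L. \<Sum>j\<in>L. (G i j)\<^sup>2)"
    using gram_trace_squared_le[of x L] by (simp add: G_def)
  also have "\<dots> \<le> DIM('a) * (2 * (m * r))"
    using frobenius_le by (rule mult_left_mono) simp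
  finally have "m * m \<le> m * (2 * r * DIM('a))"
    by (simp add: power2_eq_square mult_ac)
  moreover have "0 \<le> m" by (simp add: m_def)
  ultimately have "m \<le> 2 * r * DIM('a)"
    using assms(3) by (cases "m = 0") (simp_all add: mult_le_cancel_left_pos)
  then show ?thesis by (simp add: m_def)
qed

(* The probability rand_graph attaches to an unordered pair, with the same choice of endpoints. *)
definition pair_prob :: "('i \<Rightarrow> real ^ 'd) \<Rightarrow> 'i set \<Rightarrow> real" where
  "pair_prob W e = edge_prob W (SOME i. i \<in> e) (SOME j. j \<in> e \<and> j \<noteq> (SOME i. i \<in> e))"

definition two_subsets :: "'i set \<Rightarrow> 'i set set" where
  "two_subsets T = {e. e \<subseteq> T \<and> card e = 2}"

definition triples :: "'i set \<Rightarrow> 'i set set" where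
  "triples I = {T. T \<subseteq> I \<and> card T = 3}"

definition triangle_prob :: "('i \<Rightarrow> real ^ 'd) \<Rightarrow> 'i set \<Rightarrow> real" where
  "triangle_prob W T = (\<Prod>e\<in>two_subsets T. pair_prob W e)"

lemma edge_prob_commute: "edge_prob W i j = edge_prob W j i"
  by (simp add: edge_prob_def inner_commute)

lemma edge_prob_nonneg: "0 \<le> edge_prob W i j"
  and edge_prob_le_1: "edge_prob W i j \<le> 1"
  by (auto simp: edge_prob_def)

lemma edge_prob_le_norm_mult: "edge_prob W i j \<le> norm (W i) * norm (W j)"
  using norm_cauchy_schwarz[of "W i" "W j"] by (auto simp: edge_prob_def)

lemma pair_prob_nonneg: "0 \<le> pair_prob W e"
  and pair_prob_le_1: "pair_prob W e \<le> 1"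
  by (simp_all add: pair_prob_def edge_prob_nonneg edge_prob_le_1)

lemma pair_prob_doubleton:
  assumes "i \<noteq> j"
  shows "pair_prob W {i, j} = edge_prob W i j"
proof -
  have "(SOME x. x \<in> {i, j}) \<in> {i, j}" by (rule someI) auto
  then consider "(SOME x. x \<in> {i, j}) = i" | "(SOME x. x \<in> {i, j}) = j" by blast
  then show ?thesis
  proof cases
    case 1
    moreover have "(SOME y. y \<in> {i, j} \<and> y \<noteq> i) = j"
      using assms by (intro some_equality) auto
    ultimately show ?thesis by (simp add: pair_prob_def)
  next
    case 2
    moreover have "(SOME y. y \<in> {i, j} \<and> y \<noteq> j) = i"
      using assms by (intro some_equality) auto
    ultimately show ?thesis by (simp add: pair_prob_def edge_prob_commute)
  qed
qed

lemma finite_upairs: "finite I \<Longrightarrow> finite (upairs I)"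
  by (rule finite_subset[of _ "Pow I"]) (auto simp: upairs_def)

lemma expectation_prod_edge_indicators:
  assumes "finite I" "F \<subseteq> upairs I"
  shows "measure_pmf.expectation (rand_graph I W) (\<lambda>E. \<Prod>e\<in>F. of_bool (E e))
           = (\<Prod>e\<in>F. pair_prob W e)"
proof -
  define f where "f e b = (if e \<in> F then of_bool b else (1::real))" for e b
  have fin: "finite (upairs I)" using assms(1) by (rule finite_upairs)
  have prod_F: "(\<Prod>e\<in>F. g e) = (\<Prod>e\<in>upairs I. if e \<in> F then g e else 1)" for g :: "_ \<Rightarrow> real"
    using prod.mono_neutral_right[OF fin assms(2), of "\<lambda>e. if e \<in> F then g e else 1"] by simp
  have "measure_pmf.expectation (rand_graph I W) (\<lambda>E. \<Prod>e\<in>F. of_bool (E e))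
        = measure_pmf.expectation (Pi_pmf (upairs I) False (\<lambda>e. bernoulli_pmf (pair_prob W e)))
            (\<lambda>E. \<Prod>e\<in>upairs I. f e (E e))"
    by (simp add: rand_graph_def pair_prob_def prod_F f_def)
  also have "\<dots> = (\<Prod>e\<in>upairs I. measure_pmf.expectation (bernoulli_pmf (pair_prob W e)) (f e))"
    by (rule expectation_prod_Pi_pmf[OF fin]) (auto simp: integrable_measure_pmf_finite f_def)
  also have "\<dots> = (\<Prod>e\<in>F. pair_prob W e)"
    by (subst prod_F) (auto intro!: prod.cong simp: f_def pair_prob_nonneg pair_prob_le_1)
  finally show ?thesis .
qed

lemma integrable_rand_graph_bounded:
  "(\<And>E. \<bar>f E\<bar> \<le> (B::real)) \<Longrightarrow> integrable (rand_graph I W) f"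
  by (rule measure_pmf.integrable_const_bound[where B = B]) auto

lemma expected_degree_eq_sum:
  assumes "finite I" "i \<in> I"
  shows "expected_degree I W i = (\<Sum>j\<in>I - {i}. edge_prob W i j)"
proof -
  have "{j \<in> I. j \<noteq> i \<and> E {i, j}} = (I - {i}) \<inter> {j. E {i, j}}" for E
    by auto
  then have "real (degree I E i) = (\<Sum>j\<in>I - {i}. of_bool (E {i, j}))" for E
    using assms(1) by (simp add: degree_def)
  then have "expected_degree I W i
      = (\<Sum>j\<in>I - {i}. measure_pmf.expectation (rand_graph I W) (\<lambda>E. of_bool (E {i, j})))"
    unfolding expected_degree_def
    by (simp add: Bochner_Integration.integral_sum integrable_rand_graph_bounded[where B = 1])
  also have "\<dots> = (\<Sum>j\<in>I - {i}. edge_prob W i j)"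
  proof (rule sum.cong[OF refl])
    fix j assume "j \<in> I - {i}"
    then have "{{i, j}} \<subseteq> upairs I" using assms(2) by (auto simp: upairs_def)
    with \<open>j \<in> I - {i}\<close> show "measure_pmf.expectation (rand_graph I W) (\<lambda>E. of_bool (E {i, j}))
        = edge_prob W i j"
      using expectation_prod_edge_indicators[OF assms(1), of "{{i, j}}" W]
        pair_prob_doubleton[of i j W] by auto
  qed
  finally show ?thesis .
qed

lemma finite_triples: "finite I \<Longrightarrow> finite (triples I)"
  by (rule finite_subset[of _ "Pow I"]) (auto simp: triples_def)

lemma finite_two_subsets:
  assumes "card T = 3"
  shows "finite (two_subsets T)"
proof -
  have "finite T" using assms by (auto intro: card_ge_0_finite)
  moreover have "two_subsets T \<subseteq> Pow T" by (auto simp: two_subsets_def)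
  ultimately show ?thesis by (metis finite_Pow_iff finite_subset)
qed

lemma two_subsets_subset_upairs: "T \<subseteq> I \<Longrightarrow> two_subsets T \<subseteq> upairs I"
  by (auto simp: two_subsets_def upairs_def card_2_iff)

lemma triangles_eq: "triangles I E = {T \<in> triples I. \<forall>e\<in>two_subsets T. E e}"
  unfolding triangles_def triples_def two_subsets_def
  by (auto simp: card_2_iff) (metis empty_subsetI insert_subset)

lemma expected_triangles_eq_sum:
  assumes "finite I"
  shows "expected_triangles I W = (\<Sum>T\<in>triples I. triangle_prob W T)"
proof -
  have "real (card (triangles I E)) = (\<Sum>T\<in>triples I. \<Prod>e\<in>two_subsets T. of_bool (E e))" for E
  proof -
    have "(\<Sum>T\<in>triples I. \<Prod>e\<in>two_subsets T. of_bool (E e))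
        = (\<Sum>T\<in>triples I. of_bool (\<forall>e\<in>two_subsets T. E e) :: real)"
      by (intro sum.cong refl prod_of_bool finite_two_subsets) (simp add: triples_def)
    also have "\<dots> = real (card (triangles I E))"
      using finite_triples[OF assms] by (simp add: triangles_eq Int_def)
    finally show ?thesis ..
  qed
  then have "expected_triangles I W = (\<Sum>T\<in>triples I.
      measure_pmf.expectation (rand_graph I W) (\<lambda>E. \<Prod>e\<in>two_subsets T. of_bool (E e)))"
    unfolding expected_triangles_def
    by (simp add: Bochner_Integration.integral_sum integrable_rand_graph_bounded[where B = 1]
        abs_prod prod_le_1)
  also have "\<dots> = (\<Sum>T\<in>triples I. triangle_prob W T)"
    by (intro sum.cong refl) (auto simp: triangle_prob_def triples_def
        intro!: expectation_prod_edge_indicators[OF assms] two_subsets_subset_upairs)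
  finally show ?thesis .
qed

lemma expected_degree_mono:
  assumes "finite I" "K \<subseteq> I" "i \<in> K"
  shows "expected_degree K W i \<le> expected_degree I W i"
proof -
  have "expected_degree K W i = (\<Sum>j\<in>K - {i}. edge_prob W i j)"
    using assms finite_subset[OF assms(2,1)] by (simp add: expected_degree_eq_sum)
  also have "\<dots> \<le> (\<Sum>j\<in>I - {i}. edge_prob W i j)"
    using assms by (intro sum_mono2) (auto simp: edge_prob_nonneg)
  also have "\<dots> = expected_degree I W i"
    using assms by (auto simp: expected_degree_eq_sum)
  finally show ?thesis .
qed

lemma expected_triangles_subset:
  assumes "finite I" "K \<subseteq> I"
  shows "expected_triangles I W
           = expected_triangles K W + (\<Sum>T\<in>triples I - triples K. triangle_prob W T)"
proof -
  have "triples K \<subseteq> triples I" using assms(2) by (auto simp: triples_def)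
  then show ?thesis
    using finite_subset[OF assms(2,1)] assms(1)
    by (simp add: expected_triangles_eq_sum finite_triples sum.subset_diff)
qed

lemma triangle_prob_nonneg: "0 \<le> triangle_prob W T"
  by (simp add: triangle_prob_def prod_nonneg pair_prob_nonneg)

lemma triangle_prob_triple:
  assumes "a \<noteq> b" "a \<noteq> c" "b \<noteq> c"
  shows "triangle_prob W {a, b, c} = edge_prob W a b * edge_prob W a c * edge_prob W b c"
proof -
  have "two_subsets {a, b, c} = {{a, b}, {a, c}, {b, c}}"
    using assms by (auto simp: two_subsets_def card_2_iff doubleton_eq_iff)
  moreover have "{a, b} \<noteq> {a, c}" "{a, b} \<noteq> {b, c}" "{a, c} \<noteq> {b, c}"
    using assms by (auto simp: doubleton_eq_iff)
  ultimately show ?thesis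
    using assms by (simp add: triangle_prob_def pair_prob_doubleton)
qed

lemma triples_memE:
  assumes "T \<in> triples I" "i \<in> T"
  obtains j k where "T = {i, j, k}" "i \<noteq> j" "i \<noteq> k" "j \<noteq> k" "j \<in> I" "k \<in> I"
proof -
  have "card (T - {i}) = 2"
    using assms by (auto simp: triples_def card_Diff_singleton)
  then obtain j k where "T - {i} = {j, k}" "j \<noteq> k" by (auto simp: card_2_iff)
  with assms that show ?thesis by (auto simp: triples_def)
qed

(* Dropping the factor of the edge ik, the sum over triangles ijk factors through the degrees. *)
lemma sum_triangle_prob_through_le:
  assumes "finite I" "i \<in> I" "\<forall>j\<in>I. expected_degree I W j \<le> c"
  shows "(\<Sum>T\<in>{T \<in> triples I. i \<in> T}. triangle_prob W T) \<le> c\<^sup>2"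
proof -
  define B where "B = Sigma (I - {i}) (\<lambda>j. I - {i, j})"
  have deg: "(\<Sum>k\<in>I - {j}. edge_prob W j k) \<le> c" if "j \<in> I" for j
    using assms that by (simp add: expected_degree_eq_sum)
  have "{T \<in> triples I. i \<in> T} \<subseteq> (\<lambda>(j, k). {i, j, k}) ` B"
  proof
    fix T assume "T \<in> {T \<in> triples I. i \<in> T}"
    then obtain j k where "T = {i, j, k}" "i \<noteq> j" "i \<noteq> k" "j \<noteq> k" "j \<in> I" "k \<in> I"
      by (auto elim: triples_memE)
    then show "T \<in> (\<lambda>(j, k). {i, j, k}) ` B" by (auto simp: B_def)
  qed
  then have "(\<Sum>T\<in>{T \<in> triples I. i \<in> T}. triangle_prob W T)
      \<le> (\<Sum>T\<in>(\<lambda>(j, k). {i, j, k}) ` B. triangle_prob W T)"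
    using assms(1) by (intro sum_mono2) (auto simp: B_def triangle_prob_nonneg)
  also have "\<dots> \<le> (\<Sum>(j, k)\<in>B. triangle_prob W {i, j, k})"
    using assms(1) sum_image_le[of B "triangle_prob W" "\<lambda>(j, k). {i, j, k}"]
    by (simp add: B_def triangle_prob_nonneg o_def case_prod_unfold)
  also have "\<dots> = (\<Sum>j\<in>I - {i}. \<Sum>k\<in>I - {i, j}. triangle_prob W {i, j, k})"
    using assms(1) by (simp add: B_def sum.Sigma)
  also have "\<dots> \<le> (\<Sum>j\<in>I - {i}. \<Sum>k\<in>I - {j}. edge_prob W i j * edge_prob W j k)"
  proof (intro sum_mono)
    fix j assume "j \<in> I - {i}"
    then have "(\<Sum>k\<in>I - {i, j}. triangle_prob W {i, j, k})
        \<le> (\<Sum>k\<in>I - {i, j}. edge_prob W i j * edge_prob W j k)"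
      by (intro sum_mono)
        (auto simp: triangle_prob_triple
          intro!: mult_right_mono mult_right_le_one_le edge_prob_nonneg edge_prob_le_1)
    also have "\<dots> \<le> (\<Sum>k\<in>I - {j}. edge_prob W i j * edge_prob W j k)"
      using assms(1) by (intro sum_mono2) (auto simp: edge_prob_nonneg)
    finally show "(\<Sum>k\<in>I - {i, j}. triangle_prob W {i, j, k})
        \<le> (\<Sum>k\<in>I - {j}. edge_prob W i j * edge_prob W j k)" .
  qed
  also have "\<dots> \<le> (\<Sum>j\<in>I - {i}. edge_prob W i j * c)"
    using deg by (intro sum_mono) (auto simp flip: sum_distrib_left intro: mult_left_mono edge_prob_nonneg)
  also have "\<dots> = (\<Sum>j\<in>I - {i}. edge_prob W i j) * c"
    by (simp add: sum_distrib_right)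
  also have "\<dots> \<le> c * c"
    using deg[OF assms(2)] order_trans[OF sum_nonneg deg[OF assms(2)]]
    by (intro mult_right_mono) (auto simp: edge_prob_nonneg)
  finally show ?thesis by (simp add: power2_eq_square)
qed

lemma sum_triangle_prob_small_vertex_le:
  assumes "finite I" "card I \<le> n" "S \<subseteq> triples I"
    and "\<forall>T\<in>S. (\<exists>i\<in>T. norm (W i) \<le> \<epsilon>) \<and> (\<forall>j\<in>T. norm (W j) \<le> R)"
  shows "(\<Sum>T\<in>S. triangle_prob W T) \<le> real n ^ 3 * (\<epsilon> * R)\<^sup>2"
proof -
  have triangle_le: "triangle_prob W T \<le> (\<epsilon> * R)\<^sup>2" if "T \<in> S" for T
  proof -
    obtain i where "i \<in> T" "norm (W i) \<le> \<epsilon>" and bounded: "\<forall>j\<in>T. norm (W j) \<le> R"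
      using assms(4) \<open>T \<in> S\<close> by blast
    obtain j k where jk: "T = {i, j, k}" "i \<noteq> j" "i \<noteq> k" "j \<noteq> k"
      using assms(3) \<open>T \<in> S\<close> \<open>i \<in> T\<close> by (metis subsetD triples_memE)
    have short_edge: "edge_prob W i l \<le> \<epsilon> * R" if "l \<in> T" for l
    proof -
      have "norm (W i) * norm (W l) \<le> \<epsilon> * R"
        using that bounded \<open>norm (W i) \<le> \<epsilon>\<close> order_trans[OF norm_ge_zero \<open>norm (W i) \<le> \<epsilon>\<close>]
        by (intro mult_mono) auto
      then show ?thesis using edge_prob_le_norm_mult[of W i l] by linarith
    qed
    have "j \<in> T" "k \<in> T" using jk(1) by auto
    have "triangle_prob W T \<le> edge_prob W i j * edge_prob W i k"
      using jk by (simp add: triangle_prob_triple mult_right_le_one_le edge_prob_nonneg edge_prob_le_1)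
    also have "\<dots> \<le> (\<epsilon> * R) * (\<epsilon> * R)"
      using short_edge[OF \<open>j \<in> T\<close>] short_edge[OF \<open>k \<in> T\<close>]
        order_trans[OF edge_prob_nonneg short_edge[OF \<open>j \<in> T\<close>]]
      by (intro mult_mono) (simp_all add: edge_prob_nonneg)
    finally show ?thesis by (simp add: power2_eq_square)
  qed
  have "card S \<le> n ^ 3"
  proof -
    have "card S \<le> card (triples I)"
      using assms(1,3) by (intro card_mono finite_triples)
    also have "\<dots> = card I choose 3"
      using n_subsets[OF assms(1)] by (simp add: triples_def)
    also have "\<dots> \<le> card I ^ 3"
      by (cases "3 \<le> card I") (auto intro: binomial_le_pow simp: binomial_eq_0)
    also have "\<dots> \<le> n ^ 3"
      using assms(2) by (rule power_mono) simp
    finally show ?thesis .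
  qed
  then have "real (card S) \<le> real n ^ 3"
    by (metis of_nat_le_iff of_nat_power)
  have "(\<Sum>T\<in>S. triangle_prob W T) \<le> real (card S) * (\<epsilon> * R)\<^sup>2"
    using triangle_le by (rule sum_bounded_above)
  also have "\<dots> \<le> real n ^ 3 * (\<epsilon> * R)\<^sup>2"
    using \<open>real (card S) \<le> real n ^ 3\<close> by (rule mult_right_mono) simp
  finally show ?thesis .
qed

lemma max_0_inner_sgn_le_edge_prob:
  assumes "0 < R" "R \<le> norm (W i)" "R \<le> norm (W j)"
  shows "max 0 (inner (sgn (W i)) (sgn (W j))) \<le> edge_prob W i j + 1 / R\<^sup>2"
proof (cases "1 \<le> inner (W i) (W j)")
  case True
  have "inner (sgn (W i)) (sgn (W j)) \<le> 1"
    using norm_cauchy_schwarz[of "sgn (W i)" "sgn (W j)"] by (simp add: norm_sgn split: if_splits)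
  moreover have "edge_prob W i j = 1"
    using True by (simp add: edge_prob_def)
  ultimately show ?thesis by (auto intro: add_increasing2)
next
  case False
  have norms: "R\<^sup>2 \<le> norm (W i) * norm (W j)"
    using assms by (simp add: power2_eq_square mult_mono)
  have "inner (sgn (W i)) (sgn (W j)) = inner (W i) (W j) / (norm (W i) * norm (W j))"
    by (simp add: sgn_div_norm divide_inverse)
  also have "\<dots> \<le> 1 / R\<^sup>2"
    using False assms(1) norms by (intro frac_le) auto
  finally show ?thesis
    using edge_prob_nonneg[of W i j] assms(1) by simp
qed

lemma card_long_vectors_le:
  fixes W :: "'i \<Rightarrow> real ^ 'd"
  assumes "finite I" "L \<subseteq> I" "0 < R" "\<forall>i\<in>L. R \<le> norm (W i)"
    and "0 \<le> c" "\<forall>i\<in>I. expected_degree I W i \<le> c"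
  shows "real (card L) \<le> 2 * (1 + c + card I / R\<^sup>2) * CARD('d)"
proof -
  have finite_L: "finite L" using assms(1,2) by (rule finite_subset[rotated])
  have "(\<Sum>j\<in>L. max 0 (inner (sgn (W i)) (sgn (W j)))) \<le> 1 + c + card I / R\<^sup>2" if "i \<in> L" for i
  proof -
    have "(\<Sum>j\<in>L. max 0 (inner (sgn (W i)) (sgn (W j))))
        = max 0 (inner (sgn (W i)) (sgn (W i))) + (\<Sum>j\<in>L - {i}. max 0 (inner (sgn (W i)) (sgn (W j))))"
      using finite_L that by (simp add: sum.remove)
    also have "\<dots> \<le> 1 + (\<Sum>j\<in>L - {i}. edge_prob W i j + 1 / R\<^sup>2)"
      using assms(3,4) that
      by (intro add_mono sum_mono max_0_inner_sgn_le_edge_prob) (auto simp: norm_sgn dot_square_norm)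
    also have "\<dots> = 1 + (\<Sum>j\<in>L - {i}. edge_prob W i j) + card (L - {i}) / R\<^sup>2"
      by (simp add: sum.distrib)
    also have "\<dots> \<le> 1 + (\<Sum>j\<in>I - {i}. edge_prob W i j) + card I / R\<^sup>2"
      using assms(1,2) card_mono[of I "L - {i}"]
      by (intro add_mono sum_mono2 divide_right_mono) (auto simp: edge_prob_nonneg)
    also have "\<dots> \<le> 1 + c + card I / R\<^sup>2"
      using assms(1,2,6) that by (simp add: expected_degree_eq_sum subset_eq)
    finally show ?thesis .
  qed
  then have "real (card L) \<le> 2 * (1 + c + card I / R\<^sup>2) * DIM(real ^ 'd)"
    using assms(3,4,5) finite_L
    by (intro card_le_of_positive_inner_row_sums[where x = "\<lambda>i. sgn (W i)"])
      (auto simp: norm_sgn dest!: bspec[OF assms(4)])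
  then show ?thesis by simp
qed

lemma sum_triangle_prob_not_within_le:
  fixes W :: "'i \<Rightarrow> real ^ 'd"
  assumes "finite I" "card I \<le> n" "0 < R" "0 \<le> c" "\<forall>i\<in>I. expected_degree I W i \<le> c"
  shows "(\<Sum>T\<in>triples I - triples {i\<in>I. \<epsilon> \<le> norm (W i) \<and> norm (W i) \<le> R}. triangle_prob W T)
           \<le> 2 * (1 + c + n / R\<^sup>2) * CARD('d) * c\<^sup>2 + real n ^ 3 * (\<epsilon> * R)\<^sup>2"
proof -
  define K where "K = {i\<in>I. \<epsilon> \<le> norm (W i) \<and> norm (W i) \<le> R}"
  define L where "L = {i\<in>I. R < norm (W i)}"
  define A where "A = triples I - triples K"
  have "L \<subseteq> I" "finite L" "finite A"
    using assms(1) by (auto simp: L_def A_def finite_triples)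
  have "(\<Sum>T\<in>A. triangle_prob W T)
      \<le> (\<Sum>i\<in>L. \<Sum>T\<in>{T \<in> A. i \<in> T}. triangle_prob W T) + (\<Sum>T\<in>{T \<in> A. T \<inter> L = {}}. triangle_prob W T)"
    using \<open>finite A\<close> \<open>finite L\<close> by (rule sum_le_sum_containing_plus_sum_disjoint) (simp add: triangle_prob_nonneg)
  also have "\<dots> \<le> (\<Sum>i\<in>L. c\<^sup>2) + real n ^ 3 * (\<epsilon> * R)\<^sup>2"
  proof (rule add_mono[OF sum_mono])
    fix i assume "i \<in> L"
    have "(\<Sum>T\<in>{T \<in> A. i \<in> T}. triangle_prob W T) \<le> (\<Sum>T\<in>{T \<in> triples I. i \<in> T}. triangle_prob W T)"
      using finite_triples[OF assms(1)] by (intro sum_mono2) (auto simp: A_def triangle_prob_nonneg)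
    also have "\<dots> \<le> c\<^sup>2"
      using \<open>i \<in> L\<close> \<open>L \<subseteq> I\<close> assms(1,5) by (intro sum_triangle_prob_through_le) auto
    finally show "(\<Sum>T\<in>{T \<in> A. i \<in> T}. triangle_prob W T) \<le> c\<^sup>2" .
  next
    have "\<forall>T\<in>{T \<in> A. T \<inter> L = {}}. (\<exists>i\<in>T. norm (W i) \<le> \<epsilon>) \<and> (\<forall>j\<in>T. norm (W j) \<le> R)"
      by (fastforce simp: A_def K_def L_def triples_def not_less)
    then show "(\<Sum>T\<in>{T \<in> A. T \<inter> L = {}}. triangle_prob W T) \<le> real n ^ 3 * (\<epsilon> * R)\<^sup>2"
      using assms(1,2) by (intro sum_triangle_prob_small_vertex_le) (auto simp: A_def)
  qed
  also have "\<dots> \<le> 2 * (1 + c + n / R\<^sup>2) * CARD('d) * c\<^sup>2 + real n ^ 3 * (\<epsilon> * R)\<^sup>2"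
  proof -
    have "real (card L) \<le> 2 * (1 + c + card I / R\<^sup>2) * CARD('d)"
      using assms \<open>L \<subseteq> I\<close> by (intro card_long_vectors_le) (auto simp: L_def)
    also have "\<dots> \<le> 2 * (1 + c + n / R\<^sup>2) * CARD('d)"
      using assms(2) by (intro mult_right_mono mult_left_mono add_left_mono divide_right_mono) auto
    finally show ?thesis by (simp add: mult_right_mono)
  qed
  finally show ?thesis by (simp add: A_def K_def)
qed

theorem mainTheorem6:
  fixes I :: "'i set" and V :: "'i \<Rightarrow> real ^ 'd" and n :: nat and c \<Delta> :: real
  assumes "n \<ge> 2" and "c \<ge> 4" and "\<Delta> > 0" and "CARD('d) \<le> n"
    and "finite I" and "card I \<le> n"
    and "\<forall>i\<in>I. expected_degree I V i \<le> c"
    and "expected_triangles I V \<ge> \<Delta> * real n"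
    and "10 * c ^ 3 * real CARD('d) \<le> \<Delta> * real n / (log 2 (real n))\<^sup>2"
    and "\<Delta> * real n / (log 2 (real n))\<^sup>2 + 4 \<le> \<Delta> * real n / 2"
  shows "(\<forall>i\<in>{i\<in>I. real n powr (-2) \<le> norm (V i) \<and> norm (V i) \<le> 2 * sqrt (real n)}.
            expected_degree {i\<in>I. real n powr (-2) \<le> norm (V i) \<and> norm (V i) \<le> 2 * sqrt (real n)} V i \<le> c)
       \<and> expected_triangles {i\<in>I. real n powr (-2) \<le> norm (V i) \<and> norm (V i) \<le> 2 * sqrt (real n)} V
           \<ge> \<Delta> * real n / 2"
proof -
  define \<epsilon> where "\<epsilon> = real n powr (-2)"
  define R where "R = 2 * sqrt (real n)"
  define K where "K = {i\<in>I. \<epsilon> \<le> norm (V i) \<and> norm (V i) \<le> R}"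
  have "K \<subseteq> I" "0 < real n" using assms(1) by (auto simp: K_def)
  have quarter: "real n / R\<^sup>2 = 1 / 4" and short_weight: "real n ^ 3 * (\<epsilon> * R)\<^sup>2 = 4"
    using \<open>0 < real n\<close>
    by (simp_all add: \<epsilon>_def R_def power_mult_distrib powr_minus powr_realpow field_simps eval_nat_numeral)
  have "2 * (1 + c + n / R\<^sup>2) * c\<^sup>2 = (5 / 2 + 2 * c) * c\<^sup>2"
    unfolding quarter by simp
  also have "\<dots> \<le> (10 * c) * c\<^sup>2"
    using assms(2) by (intro mult_right_mono) auto
  also have "\<dots> = 10 * c ^ 3"
    by (simp add: power2_eq_square power3_eq_cube)
  finally have "(2 * (1 + c + n / R\<^sup>2) * c\<^sup>2) * CARD('d) \<le> 10 * c ^ 3 * CARD('d)"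
    by (rule mult_right_mono) simp
  then have cubic: "2 * (1 + c + n / R\<^sup>2) * CARD('d) * c\<^sup>2 \<le> 10 * c ^ 3 * CARD('d)"
    by (simp only: ac_simps)
  have "0 < R" using \<open>0 < real n\<close> by (simp add: R_def)
  then have "(\<Sum>T\<in>triples I - triples K. triangle_prob V T)
      \<le> 2 * (1 + c + n / R\<^sup>2) * CARD('d) * c\<^sup>2 + real n ^ 3 * (\<epsilon> * R)\<^sup>2"
    unfolding K_def using assms(2,5,6,7) by (intro sum_triangle_prob_not_within_le) auto
  then have lost: "(\<Sum>T\<in>triples I - triples K. triangle_prob V T) \<le> 10 * c ^ 3 * CARD('d) + 4"
    using cubic short_weight by linarith
  have "expected_triangles K V \<ge> \<Delta> * real n / 2"
    using expected_triangles_subset[OF assms(5) \<open>K \<subseteq> I\<close>, of V] assms(8-10) lost by linarith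
  moreover have "\<forall>i\<in>K. expected_degree K V i \<le> c"
    using assms(5,7) \<open>K \<subseteq> I\<close> expected_degree_mono by (metis order_trans subsetD)
  ultimately show ?thesis by (simp add: K_def \<epsilon>_def R_def)
qed

end
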